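(* Let $n \geqslant 3$ and let $C_{n+1}$ be the cycle with vertex set $\{0,1,\ldots,n\}$ and edges $\{j,j+1\}$ for $0\leqslant j<n$ together with $\{n,0\}$. Then the word $012\ldots n$ does not occur as a subword (contiguous factor) of any uniform word whose alternating graph is $C_{n+1}$.
   Context: A word is uniform if each symbol occurring in it occurs the same number of times. A word $w$ is a subword of $v=v_0v_1\ldots v_N$ if $w=v_mv_{m+1}\ldots v_{m+k}$ for some $m,k$. Two distinct symbols $a,b$ alternate in a word $u$ if both occur in $u$ and, after erasing all other letters of $u$, one obtains a factor of $abab\ldots$ or of $baba\ldots$. The alternating graph of a word $u$ is the graph whose vertices are the symbols occurring in $u$, with an edge $(a,b)$ iff $a$ and $b$ alternate in $u$. *)

theory Defs
  imports Main
begin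

definition uniform :: "'a list \<Rightarrow> bool" where
  "uniform u \<longleftrightarrow> (\<forall>a \<in> set u. \<forall>b \<in> set u. count_list u a = count_list u b)"

definition subword :: "'a list \<Rightarrow> 'a list \<Rightarrow> bool" where
  "subword w v \<longleftrightarrow> (\<exists>p s. v = p @ w @ s)"

definition abab_factor :: "'a \<Rightarrow> 'a \<Rightarrow> nat \<Rightarrow> nat \<Rightarrow> 'a list" where
  "abab_factor a b k m = map (\<lambda>i. if even i then a else b) [k..<k+m]"

definition alternate :: "'a list \<Rightarrow> 'a \<Rightarrow> 'a \<Rightarrow> bool" where
  "alternate u a b \<longleftrightarrow> a \<noteq> b \<and> a \<in> set u \<and> b \<in> set u \<and>
     (\<exists>k m. filter (\<lambda>x. x = a \<or> x = b) u = abab_factor a b k m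
          \<or> filter (\<lambda>x. x = a \<or> x = b) u = abab_factor b a k m)"

definition alt_vertices :: "'a list \<Rightarrow> 'a set" where
  "alt_vertices u = set u"

definition alt_edges :: "'a list \<Rightarrow> ('a \<times> 'a) set" where
  "alt_edges u = {(a, b). alternate u a b}"

definition cycle_vertices :: "nat \<Rightarrow> nat set" where
  "cycle_vertices n = {0..n}"

definition cycle_edges :: "nat \<Rightarrow> (nat \<times> nat) set" where
  "cycle_edges n = {(a, b). (a < n \<and> b = a + 1) \<or> (b < n \<and> a = b + 1)
                          \<or> (a = n \<and> b = 0) \<or> (a = 0 \<and> b = n)}"

end

theory Submission
  imports Defs
begin

text \<open>Distinct letters a, b alternate in u iff the balance #a - #b over the
  prefixes of u takes only two consecutive values. If 0 1 ... n occurs in u at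
  position t, each cycle edge {j, j+1}, and also the edge {0, n}, keeps the
  balance measured relative to position t in {0, 1}. The balance of 0 against n
  is the telescoping sum of the nonnegative balances of j against j+1, so every
  partial sum, the balance of 0 against i, stays in {0, 1} as well: 0 alternates
  with every i \<le> n, and for i = 2 this is not an edge of the cycle when n \<ge> 3.\<close>

definition balance :: "'a \<Rightarrow> 'a \<Rightarrow> 'a list \<Rightarrow> int" where
  "balance a b w = int (count_list w a) - int (count_list w b)"

lemma balance_filter: "balance a b (filter (\<lambda>x. x = a \<or> x = b) w) = balance a b w"
  by (induction w) (auto simp: balance_def)

lemma sum_balance_telescope:
  "(\<Sum>j<i. balance (f j) (f (Suc j)) w) = balance (f 0) (f i) w"
  by (induction i) (simp_all add: balance_def)

lemma abab_factor_Suc: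
  "abab_factor a b k (Suc m) = abab_factor a b k m @ [if even (k + m) then a else b]"
  by (simp add: abab_factor_def)

lemma length_abab_factor [simp]: "length (abab_factor a b k m) = m"
  by (simp add: abab_factor_def)

lemma abab_factor_swap: "abab_factor b a k m = abab_factor a b (Suc k) m"
  by (induction m) (simp_all add: abab_factor_Suc, simp add: abab_factor_def)

lemma abab_factor_prefix:
  assumes "w @ w' = abab_factor a b k m"
  shows "w = abab_factor a b k (length w)"
proof -
  have "length w \<le> m"
    using arg_cong[OF assms, of length] by simp
  moreover have "w = take (length w) (abab_factor a b k m)"
    using assms by (metis append_eq_conv_conj)
  ultimately show ?thesis
    by (simp add: abab_factor_def take_map take_upt)
qed

lemma balance_abab_factor:
  "a \<noteq> b \<Longrightarrow> balance a b (abab_factor a b k m) = int ((k + m) mod 2) - int (k mod 2)"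
proof (induction m)
  case 0
  then show ?case by (simp add: abab_factor_def balance_def)
next
  case (Suc m)
  then show ?case
    by (cases "even (k + m)") (auto simp: abab_factor_Suc balance_def elim!: evenE oddE)
qed

lemma alternate_balance_window:
  assumes "alternate u a b"
  shows "\<exists>c. \<forall>x. balance a b (take x u) \<in> {c, c + 1}"
proof -
  let ?P = "\<lambda>x. x = a \<or> x = b"
  have "a \<noteq> b" using assms by (simp add: alternate_def)
  obtain k m where k: "filter ?P u = abab_factor a b k m"
    using assms unfolding alternate_def by (metis abab_factor_swap)
  have "balance a b (take x u) \<in> {- int (k mod 2), - int (k mod 2) + 1}" for x
  proof -
    have "filter ?P (take x u) @ filter ?P (drop x u) = abab_factor a b k m"
      using k by (metis append_take_drop_id filter_append)
    then have "balance a b (take x u)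
        = int ((k + length (filter ?P (take x u))) mod 2) - int (k mod 2)"
      using abab_factor_prefix balance_abab_factor balance_filter \<open>a \<noteq> b\<close> by metis
    then show ?thesis
      by (cases "even k"; cases "even (k + length (filter ?P (take x u)))")
        (auto elim!: evenE oddE)
  qed
  then show ?thesis by blast
qed

lemma filter_eq_abab_factor_if_balance_window:
  assumes "a \<noteq> b" "k < 2"
    and "\<forall>x \<le> length u. balance a b (take x u) \<in> {- int k, 1 - int k}"
  shows "filter (\<lambda>x. x = a \<or> x = b) u
           = abab_factor a b k (length (filter (\<lambda>x. x = a \<or> x = b) u))"
  using assms(3)
proof (induction u rule: rev_induct)
  case Nil
  then show ?case by (simp add: abab_factor_def)
next
  case (snoc z v)
  let ?P = "\<lambda>x. x = a \<or> x = b"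
  define m where "m = length (filter ?P v)"
  have "\<forall>x \<le> length v. balance a b (take x v) \<in> {- int k, 1 - int k}"
  proof (intro allI impI)
    fix x assume "x \<le> length v"
    then show "balance a b (take x v) \<in> {- int k, 1 - int k}"
      using snoc.prems[rule_format, of x] by simp
  qed
  then have IH: "filter ?P v = abab_factor a b k m"
    using snoc.IH m_def by blast
  have old: "balance a b v = int ((k + m) mod 2) - int k"
    using balance_filter[of a b v] IH balance_abab_factor[OF assms(1), of k m] assms(2)
    by simp
  have new: "balance a b (v @ [z]) \<in> {- int k, 1 - int k}"
    using snoc.prems[rule_format, of "Suc (length v)"] by simp
  consider "\<not> ?P z" | "z = a" | "z = b" by blast
  then show ?case
  proof cases
    case 1
    then show ?thesis using IH by simp
  next
    case 2
    then have "balance a b (v @ [z]) = balance a b v + 1"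
      using assms(1) by (simp add: balance_def)
    then have "(k + m) mod 2 = 0"
      using old new by auto
    then have "even (k + m)" by presburger
    then have "filter ?P (v @ [z]) = abab_factor a b k (Suc m)"
      using IH 2 by (simp add: abab_factor_Suc)
    then show ?thesis by (metis length_abab_factor)
  next
    case 3
    then have "balance a b (v @ [z]) = balance a b v - 1"
      using assms(1) by (simp add: balance_def)
    then have "(k + m) mod 2 = 1"
      using old new mod_less_divisor[of 2 "k + m"] by auto
    then have "odd (k + m)" by presburger
    then have "filter ?P (v @ [z]) = abab_factor a b k (Suc m)"
      using IH 3 assms(1) by (simp add: abab_factor_Suc)
    then show ?thesis by (metis length_abab_factor)
  qed
qed

lemma alternate_if_balance_window:
  assumes "a \<noteq> b" "a \<in> set u" "b \<in> set u"
    and window: "\<forall>x. balance a b (take x u) \<in> {c, c + 1}"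
  shows "alternate u a b"
proof -
  \<comment> \<open>the empty prefix has balance 0, which pins c down to -1 or 0\<close>
  have "c \<in> {-1, 0}" using window[rule_format, of 0] by (auto simp: balance_def)
  define k :: nat where "k = (if c = 0 then 0 else 1)"
  have "\<forall>x \<le> length u. balance a b (take x u) \<in> {- int k, 1 - int k}"
    using window \<open>c \<in> {-1, 0}\<close> by (auto simp: k_def)
  moreover have "k < 2" by (simp add: k_def)
  ultimately have "filter (\<lambda>x. x = a \<or> x = b) u
      = abab_factor a b k (length (filter (\<lambda>x. x = a \<or> x = b) u))"
    using filter_eq_abab_factor_if_balance_window[OF assms(1)] by blast
  then show ?thesis
    using assms(1-3) unfolding alternate_def by blast
qed

lemma alternate_balance_normalized:
  assumes "alternate u a b"
    and "balance a b (take y u) = balance a b (take z u) + 1"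
  shows "balance a b (take x u) - balance a b (take z u) \<in> {0, 1}"
proof -
  obtain c where c: "\<forall>x. balance a b (take x u) \<in> {c, c + 1}"
    using alternate_balance_window[OF assms(1)] by blast
  then have "balance a b (take z u) = c"
    using c[rule_format, of y] c[rule_format, of z] assms(2) by auto
  with c show ?thesis by auto
qed

lemma count_list_take_after_prefix:
  assumes "u = p @ [0..<n + 1] @ s" "j \<le> n + 1"
  shows "count_list (take (length p + j) u) i = count_list p i + (if i < j then 1 else 0)"
proof -
  have "take (length p + j) u = p @ [0..<j]"
    using assms by (simp add: take_append take_upt min_def del: upt_Suc)
  moreover have "count_list [0..<j] i = (if i < j then 1 else 0)"
    by (induction j) auto
  ultimately show ?thesis by simp
qed

lemma alternate_of_cyclic_factor:
  assumes path: "\<And>j. j < n \<Longrightarrow> alternate u j (Suc j)"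
    and closing: "alternate u 0 n"
    and "subword [0..<n + 1] u" "0 < i" "i \<le> n"
  shows "alternate u 0 i"
proof -
  obtain p s where u: "u = p @ [0..<n + 1] @ s"
    using \<open>subword [0..<n + 1] u\<close> by (auto simp: subword_def)
  define t where "t = length p"
  define B where "B a b x = balance a b (take x u) - balance a b (take t u)" for a b x
  have count: "count_list (take (t + j) u) a = count_list (take t u) a + (if a < j then 1 else 0)"
    if "j \<le> n + 1" for a j
    using count_list_take_after_prefix[OF u that, of a]
      count_list_take_after_prefix[OF u, of 0 a] by (simp add: t_def)
  have step: "balance a b (take (t + j) u) = balance a b (take t u)
      + (if a < j then 1 else 0) - (if b < j then 1 else 0)" if "j \<le> n + 1" for a b j
    using count[OF that, of a] count[OF that, of b] by (simp add: balance_def)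
  have edge: "B j (Suc j) x \<in> {0, 1}" if "j < n" for j x
  proof -
    have "balance j (Suc j) (take (t + Suc j) u) = balance j (Suc j) (take t u) + 1"
      using step[where a = j and b = "Suc j" and j = "Suc j"] that by simp
    then show ?thesis
      unfolding B_def by (rule alternate_balance_normalized[OF path[OF that]])
  qed
  have closing_window: "B 0 n x \<in> {0, 1}" for x
  proof -
    have "balance 0 n (take (t + 1) u) = balance 0 n (take t u) + 1"
      using step[where a = 0 and b = n and j = 1] \<open>0 < i\<close> \<open>i \<le> n\<close> by simp
    then show ?thesis
      unfolding B_def by (rule alternate_balance_normalized[OF closing])
  qed
  have telescope: "(\<Sum>j<m. B j (Suc j) x) = B 0 m x" for m x
    using sum_balance_telescope[where f = id and i = m] by (simp add: B_def sum_subtractf)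
  have window: "B 0 i x \<in> {0, 1}" for x
  proof -
    have nonneg: "0 \<le> B j (Suc j) x" if "j < n" for j
      using edge[OF that, of x] by auto
    have "(\<Sum>j<i. B j (Suc j) x) \<le> (\<Sum>j<n. B j (Suc j) x)"
      by (rule sum_mono2) (use \<open>i \<le> n\<close> nonneg in auto)
    moreover have "0 \<le> (\<Sum>j<i. B j (Suc j) x)"
      by (rule sum_nonneg) (use \<open>i \<le> n\<close> nonneg in auto)
    ultimately show ?thesis
      using closing_window[of x] telescope[where m = i] telescope[where m = n] by auto
  qed
  have "balance 0 i (take x u) \<in> {balance 0 i (take t u), balance 0 i (take t u) + 1}" for x
    using window[of x] unfolding B_def by auto
  moreover have "0 \<in> set u" "i \<in> set u" using u \<open>i \<le> n\<close> by auto
  ultimately show ?thesis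
    using alternate_if_balance_window[of 0 i u] \<open>0 < i\<close> by blast
qed

theorem lemma1:
  fixes n :: nat and u :: "nat list"
  assumes "n \<ge> 3"
    and "uniform u"
    and "alt_vertices u = cycle_vertices n"
    and "alt_edges u = cycle_edges n"
  shows "\<not> subword [0..<n+1] u"
proof
  assume factor: "subword [0..<n+1] u"
  have edge: "alternate u a b" if "(a, b) \<in> cycle_edges n" for a b
    using that assms(4) by (auto simp: alt_edges_def)
  have "alternate u j (Suc j)" if "j < n" for j
    using that by (intro edge) (simp add: cycle_edges_def)
  moreover have "alternate u 0 n"
    by (intro edge) (simp add: cycle_edges_def)
  ultimately have "alternate u 0 2"
    using alternate_of_cyclic_factor[OF _ _ factor, of 2] assms(1) by simp
  then have "(0, 2) \<in> cycle_edges n"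
    using assms(4) by (auto simp: alt_edges_def)
  then show False
    using assms(1) by (auto simp: cycle_edges_def)
qed

end
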